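(* Consider the explicit mass update of the kinetic finite volume scheme for the $N$-layer Saint-Venant system with mass exchange, as described in the context. Assume that the function $\chi$ has compact support contained in $[-w_M,w_M]$. Fix $n$ and suppose $H_i^n\ge0$ for all $i$. If the time step $\Delta t^n>0$ satisfies, for every layer $\alpha\in\{1,\dots,N\}$ and every cell $i$, $$\Delta t^n\le\frac{l_\alpha H_i^n\,\Delta x_i}{l_\alpha H_i^n\big(|u^n_{\alpha,i}|+w_M c_i^n\big)+\Delta x_i\big([G^{n+1/2}_{\alpha+1/2,i}]_-+[G^{n+1/2}_{\alpha-1/2,i}]_+\big)}$$ (ratios with zero denominator being omitted), then $H_i^{n+1}\ge0$ for all $i$. Consequently, if this CFL condition holds at every time step and $H_i^0\ge0$ for all $i$, then $H_i^n\ge0$ for all $i$ and $n$. This condition does not depend on the bottom slope.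
   Context: Let $g>0$, $N\ge1$, and $l_1,\dots,l_N\ge0$ with $\sum_\alpha l_\alpha=1$. The real line is partitioned into cells $C_i$ of lengths $\Delta x_i>0$; $\sigma_i^n=\Delta t^n/\Delta x_i$. At time level $n$ the discrete unknowns are the total water heights $H_i^n\ge0$ and arbitrary real layer velocities $u^n_{\alpha,i}$. Let $\chi:\mathbb{R}\to\mathbb{R}$ satisfy $\chi(-w)=\chi(w)\ge0$, $\int\chi=\int w^2\chi=1$. Set $c_i^n=\sqrt{gH_i^n/2}$ and define the discrete Gibbs densities $M^n_{\alpha,i}(\xi)=\frac{l_\alpha H_i^n}{c_i^n}\chi\big(\frac{\xi-u^n_{\alpha,i}}{c_i^n}\big)$ (with $M^n_{\alpha,i}\equiv0$ if $H_i^n=0$). Define $F^{\pm}_{h_\alpha}(X_i)=\int_{\pm\xi\ge0}\xi M^n_{\alpha,i}(\xi)\,d\xi$ (with $\xi<0$ for the minus sign), and $\mathcal F^n_{h_\alpha,i}=F^+_{h_\alpha}(X_i)+F^-_{h_\alpha}(X_{i+1})-F^+_{h_\alpha}(X_{i-1})-F^-_{h_\alpha}(X_i)$. The mass exchange terms are $G^{n+1/2}_{1/2,i}=G^{n+1/2}_{N+1/2,i}=0$ and, for $\alpha=1,\dots,N$, $$\Delta x_i\,G^{n+1/2}_{\alpha+1/2,i}=\sum_{j=1}^{\alpha}\Big(\mathcal F^n_{h_j,i}-l_j\sum_{p=1}^N\mathcal F^n_{h_p,i}\Big).$$ The new total height is $H_i^{n+1}=H_i^n-\sigma_i^n\sum_{\alpha=1}^N\mathcal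 F^n_{h_\alpha,i}$ (the topographic source term and the implicit viscosity/friction step do not modify $H$). Notation: $[a]_+=\max(0,a)$, $[a]_-=\max(0,-a)$. *)

theory Defs
  imports "HOL-Analysis.Analysis"
begin

text \<open>Kinetic finite volume scheme for the N-layer Saint-Venant system.
Cells are indexed by integers; layers by 1..N.\<close>

definition pospart :: "real \<Rightarrow> real" where "pospart a = max 0 a"
definition negpart :: "real \<Rightarrow> real" where "negpart a = max 0 (- a)"

definition cel :: "real \<Rightarrow> real \<Rightarrow> real" where
  "cel g h = sqrt (g * h / 2)"

definition gibbs :: "real \<Rightarrow> real \<Rightarrow> (real \<Rightarrow> real) \<Rightarrow> real \<Rightarrow> real \<Rightarrow> real \<Rightarrow> real" where
  "gibbs g la chi h v \<xi> =
     (if h = 0 then 0 else la * h / cel g h * chi ((\<xi> - v) / cel g h))"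

definition Fplus :: "real \<Rightarrow> real \<Rightarrow> (real \<Rightarrow> real) \<Rightarrow> real \<Rightarrow> real \<Rightarrow> real" where
  "Fplus g la chi h v = (LINT \<xi>:{0..}|lborel. \<xi> * gibbs g la chi h v \<xi>)"

definition Fminus :: "real \<Rightarrow> real \<Rightarrow> (real \<Rightarrow> real) \<Rightarrow> real \<Rightarrow> real \<Rightarrow> real" where
  "Fminus g la chi h v = (LINT \<xi>:{..<0}|lborel. \<xi> * gibbs g la chi h v \<xi>)"

text \<open>Numerical flux difference \<open>\<F>_{h_\<alpha>,i}\<close>; H i = total height in cell i,
  u \<alpha> i = velocity of layer \<alpha> in cell i (all at time level n).\<close>
definition flux :: "real \<Rightarrow> (nat \<Rightarrow> real) \<Rightarrow> (real \<Rightarrow> real) \<Rightarrow> (int \<Rightarrow> real)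
    \<Rightarrow> (nat \<Rightarrow> int \<Rightarrow> real) \<Rightarrow> nat \<Rightarrow> int \<Rightarrow> real" where
  "flux g l chi H u \<alpha> i =
     Fplus g (l \<alpha>) chi (H i) (u \<alpha> i) + Fminus g (l \<alpha>) chi (H (i + 1)) (u \<alpha> (i + 1))
   - Fplus g (l \<alpha>) chi (H (i - 1)) (u \<alpha> (i - 1)) - Fminus g (l \<alpha>) chi (H i) (u \<alpha> i)"

text \<open>Mass exchange term: Gex ... k i stands for G_{k+1/2,i}, k = 0..N.\<close>
definition Gex :: "real \<Rightarrow> nat \<Rightarrow> (nat \<Rightarrow> real) \<Rightarrow> (real \<Rightarrow> real) \<Rightarrow> (int \<Rightarrow> real)
    \<Rightarrow> (nat \<Rightarrow> int \<Rightarrow> real) \<Rightarrow> (int \<Rightarrow> real) \<Rightarrow> nat \<Rightarrow> int \<Rightarrow> real" where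
  "Gex g N l chi H u dx k i =
     (if k = 0 \<or> k = N then 0
      else (\<Sum>j = 1..k. flux g l chi H u j i - l j * (\<Sum>p = 1..N. flux g l chi H u p i)) / dx i)"

definition cfl :: "real \<Rightarrow> nat \<Rightarrow> (nat \<Rightarrow> real) \<Rightarrow> (real \<Rightarrow> real) \<Rightarrow> real \<Rightarrow> (int \<Rightarrow> real)
    \<Rightarrow> (nat \<Rightarrow> int \<Rightarrow> real) \<Rightarrow> (int \<Rightarrow> real) \<Rightarrow> real \<Rightarrow> bool" where
  "cfl g N l chi wM H u dx dt \<longleftrightarrow> dt > 0 \<and>
     (\<forall>\<alpha>\<in>{1..N}. \<forall>i. (let D = l \<alpha> * H i * (\<bar>u \<alpha> i\<bar> + wM * cel g (H i))
                          + dx i * (negpart (Gex g N l chi H u dx \<alpha> i)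
                                    + pospart (Gex g N l chi H u dx (\<alpha> - 1) i))
                     in D \<noteq> 0 \<longrightarrow> dt \<le> l \<alpha> * H i * dx i / D))"

end

theory Submission imports Defs begin

text \<open>Since the weights l_\<alpha> sum to 1, the new height splits into layer contributions
  l_\<alpha> H_i^{n+1} = l_\<alpha> H_i^n - \<sigma>_i F_{\<alpha>,i} + \<Delta>t (G_{\<alpha>+1/2,i} - G_{\<alpha>-1/2,i}),
  the exchange terms telescoping by construction.  A Gibbs density is nonnegative and
  supported in |\<xi>| \<le> |u| + w_M c, so the outgoing kinetic fluxes of cell i are at most
  l_\<alpha> H_i (|u_{\<alpha>,i}| + w_M c_i), while the incoming ones have a favourable sign.  Hence
  each contribution is at least l_\<alpha> H_i - \<Delta>t D_{\<alpha>,i} / \<Delta>x_i, where D is the denominator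
  of the CFL condition, and this is nonnegative exactly under that condition.\<close>

lemma integrable_mult_id_bounded_support:
  fixes phi :: "real \<Rightarrow> real"
  assumes int: "integrable lborel phi" and supp: "\<And>x. phi x \<noteq> 0 \<Longrightarrow> \<bar>x\<bar> \<le> K"
  shows "integrable lborel (\<lambda>x. x * phi x)"
proof (rule Bochner_Integration.integrable_bound[where f = "\<lambda>x. K * phi x"])
  show "integrable lborel (\<lambda>x. K * phi x)" using int by simp
  have [measurable]: "phi \<in> borel_measurable borel"
    using int by (simp add: borel_measurable_integrable)
  show "(\<lambda>x. x * phi x) \<in> borel_measurable lborel" by measurable
  show "AE x in lborel. norm (x * phi x) \<le> norm (K * phi x)"
  proof (rule AE_I2)
    fix x show "norm (x * phi x) \<le> norm (K * phi x)"
      using supp[of x] by (cases "phi x = 0") (auto simp: abs_mult mult_right_mono)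
  qed
qed

lemma set_integral_Ici_mult_id_nonneg:
  fixes phi :: "real \<Rightarrow> real"
  assumes "\<And>x. phi x \<ge> 0"
  shows "(LINT x:{0..}|lborel. x * phi x) \<ge> 0"
  unfolding set_lebesgue_integral_def
  by (rule Bochner_Integration.integral_nonneg) (auto simp: indicator_def assms)

lemma set_integral_Iio_mult_id_nonpos:
  fixes phi :: "real \<Rightarrow> real"
  assumes "\<And>x. phi x \<ge> 0"
  shows "(LINT x:{..<0}|lborel. x * phi x) \<le> 0"
proof -
  have "0 \<le> integral\<^sup>L lborel (\<lambda>x. - (indicator {..<0} x *\<^sub>R (x * phi x)))"
    by (rule Bochner_Integration.integral_nonneg)
      (auto simp: indicator_def assms mult_nonpos_nonneg)
  then show ?thesis unfolding set_lebesgue_integral_def by simp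
qed

lemma set_integral_halflines_diff_le:
  fixes phi :: "real \<Rightarrow> real"
  assumes int: "integrable lborel phi" and nn: "\<And>x. phi x \<ge> 0"
    and supp: "\<And>x. phi x \<noteq> 0 \<Longrightarrow> \<bar>x\<bar> \<le> K"
  shows "(LINT x:{0..}|lborel. x * phi x) - (LINT x:{..<0}|lborel. x * phi x)
           \<le> K * (LINT x|lborel. phi x)"
proof -
  have ix: "integrable lborel (\<lambda>x. x * phi x)"
    using int supp by (rule integrable_mult_id_bounded_support)
  have "(LINT x:{0..}|lborel. x * phi x) - (LINT x:{..<0}|lborel. x * phi x)
      = integral\<^sup>L lborel (\<lambda>x. indicator {0..} x *\<^sub>R (x * phi x) - indicator {..<0} x *\<^sub>R (x * phi x))"
    unfolding set_lebesgue_integral_def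
    using integrable_mult_indicator[OF _ ix, of "{0..}"] integrable_mult_indicator[OF _ ix, of "{..<0}"]
    by (simp add: integral_diff)
  also have "\<dots> = integral\<^sup>L lborel (\<lambda>x. \<bar>x\<bar> * phi x)"
    by (rule Bochner_Integration.integral_cong) (auto simp: indicator_def)
  also have "\<dots> \<le> integral\<^sup>L lborel (\<lambda>x. K * phi x)"
  proof (rule Bochner_Integration.integral_mono)
    show "integrable lborel (\<lambda>x. \<bar>x\<bar> * phi x)"
      using integrable_abs[OF ix] by (simp add: abs_mult nn)
    show "integrable lborel (\<lambda>x. K * phi x)" using int by simp
    fix x show "\<bar>x\<bar> * phi x \<le> K * phi x"
      using supp[of x] nn[of x] by (cases "phi x = 0") (auto simp: mult_right_mono)
  qed
  also have "\<dots> = K * (LINT x|lborel. phi x)" by simp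
  finally show ?thesis .
qed

lemma support_bound_nonneg:
  fixes chi :: "real \<Rightarrow> real"
  assumes "(LINT w|lborel. chi w) = 1" and "\<forall>w. w \<notin> {- wM..wM} \<longrightarrow> chi w = 0"
  shows "wM \<ge> 0"
proof (rule ccontr)
  assume "\<not> wM \<ge> 0"
  then have "chi = (\<lambda>w. 0)" using assms(2) by fastforce
  then show False using assms(1) by simp
qed

lemma cel_pos: "g > 0 \<Longrightarrow> h > 0 \<Longrightarrow> cel g h > 0"
  by (simp add: cel_def)

lemma cel_nonneg: "g > 0 \<Longrightarrow> h \<ge> 0 \<Longrightarrow> cel g h \<ge> 0"
  by (simp add: cel_def)

lemma gibbs_height_nonzero:
  "h \<noteq> 0 \<Longrightarrow> gibbs g la chi h v = (\<lambda>\<xi>. la * h / cel g h * chi ((\<xi> - v) / cel g h))"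
  by (auto simp: gibbs_def)

context
  fixes g la h v :: real and chi :: "real \<Rightarrow> real"
  assumes g: "g > 0" and h: "h > 0"
begin

lemma gibbs_nonneg:
  assumes "la \<ge> 0" and "\<forall>w. chi w \<ge> 0"
  shows "gibbs g la chi h v \<xi> \<ge> 0"
  using assms h cel_pos[OF g h] by (simp add: gibbs_height_nonzero)

text \<open>The Gibbs density is a dilation of chi by c about v; integrability and total mass
  follow by the affine change of variables \<xi> = v + c w.\<close>

lemma gibbs_affine:
  "(\<lambda>w. gibbs g la chi h v (v + cel g h * w)) = (\<lambda>w. la * h / cel g h * chi w)"
  using h cel_pos[OF g h] by (auto simp: gibbs_height_nonzero)

lemma integrable_gibbs:
  assumes "integrable lborel chi"
  shows "integrable lborel (gibbs g la chi h v)"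
  using lborel_integrable_real_affine_iff[of "cel g h" "gibbs g la chi h v" v]
    cel_pos[OF g h] assms by (simp add: gibbs_affine)

lemma integral_gibbs:
  assumes "(LINT w|lborel. chi w) = 1"
  shows "(LINT \<xi>|lborel. gibbs g la chi h v \<xi>) = la * h"
  using lborel_integral_real_affine[of "cel g h" "gibbs g la chi h v" v]
    cel_pos[OF g h] assms by (simp add: gibbs_affine)

lemma gibbs_support:
  assumes "\<forall>w. w \<notin> {- wM..wM} \<longrightarrow> chi w = 0" and "gibbs g la chi h v \<xi> \<noteq> 0"
  shows "\<bar>\<xi>\<bar> \<le> \<bar>v\<bar> + wM * cel g h"
proof -
  have c: "cel g h > 0" using g h by (rule cel_pos)
  from assms(2) have "chi ((\<xi> - v) / cel g h) \<noteq> 0"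
    using h by (auto simp: gibbs_height_nonzero)
  then have "(\<xi> - v) / cel g h \<in> {- wM..wM}" using assms(1) by blast
  then have "\<bar>(\<xi> - v) / cel g h\<bar> \<le> wM"
    by (metis abs_le_iff atLeastAtMost_iff minus_le_iff)
  then have "\<bar>\<xi> - v\<bar> \<le> wM * cel g h" using c by (simp add: abs_div pos_divide_le_eq)
  then show ?thesis by linarith
qed

end

context
  fixes g la h v wM :: real and chi :: "real \<Rightarrow> real"
  assumes g: "g > 0" and h: "h \<ge> 0" and la: "la \<ge> 0"
    and chi_nonneg: "\<forall>w. chi w \<ge> 0"
begin

lemma Fplus_nonneg: "Fplus g la chi h v \<ge> 0"
proof (cases "h = 0")
  case False
  then have "h > 0" using h by simp
  then show ?thesis unfolding Fplus_def
    by (intro set_integral_Ici_mult_id_nonneg gibbs_nonneg g la chi_nonneg)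
qed (simp add: Fplus_def gibbs_def)

lemma Fminus_nonpos: "Fminus g la chi h v \<le> 0"
proof (cases "h = 0")
  case False
  then have "h > 0" using h by simp
  then show ?thesis unfolding Fminus_def
    by (intro set_integral_Iio_mult_id_nonpos gibbs_nonneg g la chi_nonneg)
qed (simp add: Fminus_def gibbs_def)

lemma Fplus_minus_Fminus_le:
  assumes chi_int: "integrable lborel chi" and chi_mass: "(LINT w|lborel. chi w) = 1"
    and chi_supp: "\<forall>w. w \<notin> {- wM..wM} \<longrightarrow> chi w = 0"
  shows "Fplus g la chi h v - Fminus g la chi h v \<le> la * h * (\<bar>v\<bar> + wM * cel g h)"
proof (cases "h = 0")
  case True
  then show ?thesis by (simp add: Fplus_def Fminus_def gibbs_def)
next
  case False
  then have hp: "h > 0" using h by simp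
  show ?thesis
    using set_integral_halflines_diff_le[OF integrable_gibbs[OF g hp chi_int]
        gibbs_nonneg[OF g hp la chi_nonneg] gibbs_support[OF g hp chi_supp]]
    unfolding Fplus_def Fminus_def integral_gibbs[OF g hp chi_mass] by (simp add: mult.commute)
qed

end

text \<open>Only the outgoing half-fluxes of cell i count against it: the incoming ones
  F^-(X_{i+1}) and -F^+(X_{i-1}) are nonpositive.\<close>

lemma flux_le_outflow_bound:
  fixes H :: "int \<Rightarrow> real" and u :: "nat \<Rightarrow> int \<Rightarrow> real"
  assumes g: "g > 0" and la: "l \<alpha> \<ge> 0" and Hnn: "\<forall>i. H i \<ge> 0"
    and chi_nonneg: "\<forall>w. chi w \<ge> 0" and chi_int: "integrable lborel chi"
    and chi_mass: "(LINT w|lborel. chi w) = 1"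
    and chi_supp: "\<forall>w. w \<notin> {- wM..wM} \<longrightarrow> chi w = 0"
  shows "flux g l chi H u \<alpha> i \<le> l \<alpha> * H i * (\<bar>u \<alpha> i\<bar> + wM * cel g (H i))"
  using Fplus_nonneg[OF g _ la chi_nonneg, of "H (i - 1)" "u \<alpha> (i - 1)"]
    Fminus_nonpos[OF g _ la chi_nonneg, of "H (i + 1)" "u \<alpha> (i + 1)"]
    Fplus_minus_Fminus_le[OF g _ la chi_nonneg chi_int chi_mass chi_supp, of "H i" "u \<alpha> i"] Hnn
  unfolding flux_def by fastforce

text \<open>The boundary values G_{1/2} = G_{N+1/2} = 0 agree with the partial-sum formula
  because the weights l_j sum to 1.\<close>

lemma Gex_eq_partial_sum:
  assumes l_sum: "(\<Sum>\<alpha> = 1..N. l \<alpha>) = 1" and "k \<le> N"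
  shows "Gex g N l chi H u dx k i =
    (\<Sum>j = 1..k. flux g l chi H u j i - l j * (\<Sum>p = 1..N. flux g l chi H u p i)) / dx i"
proof (cases "k = 0 \<or> k = N")
  case True
  have "(\<Sum>j = 1..N. flux g l chi H u j i - l j * (\<Sum>p = 1..N. flux g l chi H u p i)) = 0"
    using l_sum by (simp add: sum_subtractf sum_distrib_right[symmetric])
  then show ?thesis using True by (auto simp: Gex_def)
qed (simp add: Gex_def)

lemma Gex_diff:
  assumes l_sum: "(\<Sum>\<alpha> = 1..N. l \<alpha>) = 1" and \<alpha>: "\<alpha> \<in> {1..N}" and dx: "dx i \<noteq> 0"
  shows "dx i * (Gex g N l chi H u dx \<alpha> i - Gex g N l chi H u dx (\<alpha> - 1) i)
    = flux g l chi H u \<alpha> i - l \<alpha> * (\<Sum>p = 1..N. flux g l chi H u p i)"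
proof -
  obtain m where m: "\<alpha> = Suc m" using \<alpha> by (cases \<alpha>) auto
  show ?thesis
    using \<alpha> dx unfolding m
    by (simp add: Gex_eq_partial_sum[OF l_sum] diff_divide_distrib[symmetric])
qed

lemma cfl_step_nonneg:
  fixes a D dt dx :: real
  assumes "a \<ge> 0" "D \<ge> 0" "dx > 0" "D \<noteq> 0 \<longrightarrow> dt \<le> a * dx / D"
  shows "a - dt * D / dx \<ge> 0"
  using assms by (cases "D = 0") (auto simp: pos_le_divide_eq pos_divide_le_eq mult.commute)

context
  fixes g wM dt :: real and N :: nat and l :: "nat \<Rightarrow> real" and chi :: "real \<Rightarrow> real"
    and dx H :: "int \<Rightarrow> real" and u :: "nat \<Rightarrow> int \<Rightarrow> real"
  assumes g_pos: "g > 0"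
    and l_nonneg: "\<forall>\<alpha>\<in>{1..N}. l \<alpha> \<ge> 0"
    and l_sum: "(\<Sum>\<alpha> = 1..N. l \<alpha>) = 1"
    and dx_pos: "\<forall>i. dx i > 0"
    and chi_nonneg: "\<forall>w. chi w \<ge> 0"
    and chi_int: "integrable lborel chi"
    and chi_mass: "(LINT w|lborel. chi w) = 1"
    and chi_supp: "\<forall>w. w \<notin> {- wM..wM} \<longrightarrow> chi w = 0"
    and Hnn: "\<forall>i. H i \<ge> 0"
    and cfl: "cfl g N l chi wM H u dx dt"
begin

lemma layer_update_nonneg:
  assumes \<alpha>: "\<alpha> \<in> {1..N}"
  shows "l \<alpha> * (H i - dt / dx i * (\<Sum>p = 1..N. flux g l chi H u p i)) \<ge> 0"
proof -
  define F where "F p = flux g l chi H u p i" for p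
  define G where "G k = Gex g N l chi H u dx k i" for k
  define K where "K = \<bar>u \<alpha> i\<bar> + wM * cel g (H i)"
  define D where "D = l \<alpha> * H i * K + dx i * (negpart (G \<alpha>) + pospart (G (\<alpha> - 1)))"
  have dxi: "dx i > 0" and dt: "dt > 0" using dx_pos cfl by (auto simp: cfl_def)
  have la: "l \<alpha> \<ge> 0" using \<alpha> l_nonneg by auto
  have "wM \<ge> 0" using chi_mass chi_supp by (rule support_bound_nonneg)
  then have "K \<ge> 0" using cel_nonneg[OF g_pos, of "H i"] Hnn by (simp add: K_def)
  then have D: "D \<ge> 0" unfolding D_def using la Hnn dxi
    by (intro add_nonneg_nonneg mult_nonneg_nonneg) (auto simp: negpart_def pospart_def)
  have F_le: "F \<alpha> \<le> l \<alpha> * H i * K" unfolding F_def K_def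
    by (rule flux_le_outflow_bound[where l = l and \<alpha> = \<alpha>,
          OF g_pos la Hnn chi_nonneg chi_int chi_mass chi_supp])
  have exchange: "l \<alpha> * (\<Sum>p = 1..N. F p) = F \<alpha> - dx i * (G \<alpha> - G (\<alpha> - 1))"
    using Gex_diff[OF l_sum \<alpha>, of dx i] dxi unfolding F_def G_def by simp
  have G_diff: "G \<alpha> - G (\<alpha> - 1) \<ge> - (negpart (G \<alpha>) + pospart (G (\<alpha> - 1)))"
    by (simp add: negpart_def pospart_def)
  have "l \<alpha> * (H i - dt / dx i * (\<Sum>p = 1..N. F p))
      = l \<alpha> * H i - dt / dx i * F \<alpha> + dt * (G \<alpha> - G (\<alpha> - 1))"
    unfolding right_diff_distrib mult.left_commute[of "l \<alpha>"] exchange using dxi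
    by (simp add: field_simps)
  also have "\<dots> \<ge> l \<alpha> * H i - dt / dx i * (l \<alpha> * H i * K)
                   - dt * (negpart (G \<alpha>) + pospart (G (\<alpha> - 1)))"
  proof -
    have "dt / dx i * F \<alpha> \<le> dt / dx i * (l \<alpha> * H i * K)"
      using F_le dt dxi by (intro mult_left_mono) auto
    moreover have "dt * - (negpart (G \<alpha>) + pospart (G (\<alpha> - 1))) \<le> dt * (G \<alpha> - G (\<alpha> - 1))"
      using G_diff dt by (intro mult_left_mono) auto
    ultimately show ?thesis unfolding mult_minus_right by linarith
  qed
  also have "l \<alpha> * H i - dt / dx i * (l \<alpha> * H i * K) - dt * (negpart (G \<alpha>) + pospart (G (\<alpha> - 1)))
      = l \<alpha> * H i - dt * D / dx i"
    unfolding D_def using dxi by (simp add: field_simps)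
  also have "\<dots> \<ge> 0"
  proof (rule cfl_step_nonneg)
    show "D \<noteq> 0 \<longrightarrow> dt \<le> l \<alpha> * H i * dx i / D"
      using cfl \<alpha> unfolding cfl_def D_def K_def G_def Let_def by blast
  qed (use la Hnn D dxi in auto)
  finally show ?thesis unfolding F_def .
qed

lemma scheme_step_nonneg: "H i - dt / dx i * (\<Sum>\<alpha> = 1..N. flux g l chi H u \<alpha> i) \<ge> 0"
  (is "?H' \<ge> 0")
proof -
  have "?H' = (\<Sum>\<alpha> = 1..N. l \<alpha> * ?H')" using l_sum by (simp add: sum_distrib_right[symmetric])
  also have "\<dots> \<ge> 0" using layer_update_nonneg by (intro sum_nonneg) auto
  finally show ?thesis .
qed

end

theorem mainTheorem3:
  fixes g wM :: real and N :: nat and l :: "nat \<Rightarrow> real" and chi :: "real \<Rightarrow> real"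
    and dx :: "int \<Rightarrow> real" and dt :: "nat \<Rightarrow> real"
    and H :: "nat \<Rightarrow> int \<Rightarrow> real" and u :: "nat \<Rightarrow> nat \<Rightarrow> int \<Rightarrow> real"
  assumes g_pos: "g > 0"
    and N_pos: "N \<ge> 1"
    and l_nonneg: "\<forall>\<alpha>\<in>{1..N}. l \<alpha> \<ge> 0"
    and l_sum: "(\<Sum>\<alpha> = 1..N. l \<alpha>) = 1"
    and dx_pos: "\<forall>i. dx i > 0"
    and chi_even: "\<forall>w. chi (- w) = chi w"
    and chi_nonneg: "\<forall>w. chi w \<ge> 0"
    and chi_int: "integrable lborel chi"
    and chi_int2: "integrable lborel (\<lambda>w. w\<^sup>2 * chi w)"
    and chi_mass: "(LINT w|lborel. chi w) = 1"
    and chi_moment: "(LINT w|lborel. w\<^sup>2 * chi w) = 1"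
    and chi_supp: "\<forall>w. w \<notin> {- wM..wM} \<longrightarrow> chi w = 0"
    and scheme: "\<forall>n i. H (Suc n) i =
        H n i - dt n / dx i * (\<Sum>\<alpha> = 1..N. flux g l chi (H n) (u n) \<alpha> i)"
  shows "(\<forall>n. (\<forall>i. H n i \<ge> 0) \<and> cfl g N l chi wM (H n) (u n) dx (dt n)
               \<longrightarrow> (\<forall>i. H (Suc n) i \<ge> 0))
       \<and> ((\<forall>i. H 0 i \<ge> 0) \<and> (\<forall>n. cfl g N l chi wM (H n) (u n) dx (dt n))
               \<longrightarrow> (\<forall>n i. H n i \<ge> 0))"
proof -
  have step: "\<forall>i. H (Suc n) i \<ge> 0"
    if "\<forall>i. H n i \<ge> 0" and "cfl g N l chi wM (H n) (u n) dx (dt n)" for n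
    using scheme_step_nonneg[OF g_pos l_nonneg l_sum dx_pos chi_nonneg chi_int chi_mass chi_supp
        that] scheme by simp
  moreover have "\<forall>i. H n i \<ge> 0"
    if "\<forall>i. H 0 i \<ge> 0" and "\<forall>n. cfl g N l chi wM (H n) (u n) dx (dt n)" for n
    using that by (induction n) (simp_all add: step)
  ultimately show ?thesis by blast
qed

end
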